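(* Assume (A0)–(A3) and let $\{(x^k,\lambda^k)\}$ be generated by the NEPJ-ADMM. Then for every $k\ge1$, $$\hat{\mathcal{L}}_k-\hat{\mathcal{L}}_{k-1}\le\sum_{i=1}^{p-1}\Big(\frac{(p-2+\alpha)\beta\|A_i\|^2}{2}-\frac{m_i}{4}\Big)\|\Delta x_i^k\|^2+\Theta_\lambda^k+\Theta_p^k,$$ where $\Theta_\lambda^k:=\frac{1}{\beta\theta}\|\Delta\lambda^k\|^2+\frac{c_1}{2}\big(\|A_p^*\Delta\lambda^k\|^2-\|A_p^*\Delta\lambda^{k-1}\|^2\big)$ and $\Theta_p^k:=\Big(\frac{(p-1)\beta\|A_p\|^2}{2\alpha}-\frac{m_p}{4}\Big)\big(\|\Delta x_p^k\|^2+\|\Delta x_p^{k-1}\|^2\big)$.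
   Context: Problem: let $p\ge2$, $f_i:\mathbb{R}^{n_i}\to(-\infty,\infty]$ ($i=1,\dots,p$), $A_i\in\mathbb{R}^{d\times n_i}$, $b\in\mathbb{R}^d$, and consider $\min\{\sum_{i=1}^pf_i(x_i):\sum_{i=1}^pA_ix_i=b\}$. For $\beta>0$ the augmented Lagrangian is $\mathcal{L}_\beta(x_1,\dots,x_p,\lambda)=\sum_{i=1}^pf_i(x_i)-\langle\lambda,\sum_{i=1}^pA_ix_i-b\rangle+\frac\beta2\|\sum_{i=1}^pA_ix_i-b\|^2$. Standing assumptions: (A0) $f_1,\dots,f_{p-1}$ are proper lower semicontinuous; (A1) $A_p\ne0$ and $\mathrm{Im}(A_p)\supseteq\{b\}\cup\mathrm{Im}(A_1)\cup\dots\cup\mathrm{Im}(A_{p-1})$; (A2) $f_p:\mathbb{R}^{n_p}\to\mathbb{R}$ is differentiable with $L_p$-Lipschitz gradient; (A3) there is $\bar\beta\ge0$ with $v(\bar\beta)>-\infty$, where $v(\beta):=\inf_{x}\{\sum_{i=1}^pf_i(x_i)+\frac\beta2\|\sum_{i=1}^pA_ix_i-b\|^2\}$. $A^*$ is the transpose; $\sigma^+_{A_p}$ is the smallest positive eigenvalue of $A_p^*A_p$. Distance generating functions: for $Z\subseteq\mathbb{R}^s$ and $0<m\le M$, $\mathcal{D}_Z(m,M)$ is the class of real-valued functions $w$ differentiable on $Z$ with $w(z')-w(z)-\langle\nabla w(z),z'-z\rangle\ge\frac m2\|z'-z\|^2$ and $\|\nabla w(z)-\nabla w(z')\|\le M\|z-z'\|$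 for all $z,z'\in Z$; its Bregman distance is $(dw)_z(z'):=w(z')-w(z)-\langle\nabla w(z),z'-z\rangle$ for $z\in Z$, $z'\in\mathbb{R}^s$. NEPJ-ADMM: let $Z_i=\mathrm{dom} f_i$, $\gamma_\theta:=\theta/(1-|\theta-1|)^2$. Pick $(x_1^0,\dots,x_p^0,\lambda^0)\in Z_1\times\dots\times Z_p\times\mathbb{R}^d$, $\alpha>0$, $\beta\ge\bar\beta$ with $\beta>0$, $M_i\ge m_i>0$, $\theta\in(0,2)$ such that $\delta_i:=\frac{m_i}{4}-\big(\frac{p-2+\alpha}{2}+\frac{2\gamma_\theta(p+1)}{\sigma^+_{A_p}}\|A_p^*\|^2\big)\beta\max_{1\le l\le p-1}\|A_l\|^2>0$ for $i=1,\dots,p-1$ and $\delta_p:=\frac{m_p}{4}-\big(\frac{\beta(p-1)\|A_p\|^2}{2\alpha}+\frac{\gamma_\theta(p+1)(L_p^2+2M_p^2)}{\beta\sigma^+_{A_p}}\big)>0$. For $k\ge1$: for each $i$ choose $w_i^k\in\mathcal{D}_{Z_i}(m_i,M_i)$ and let $x_i^k$ be an optimal solution (assumed to exist) of $\min_{x_i}\{\mathcal{L}_\beta(x^{k-1}_{<i},x_i,x^{k-1}_{>i},\lambda^{k-1})+(dw_i^k)_{x_i^{k-1}}(x_i)\}$, where $(x_{<i},x_i,x_{>i})$ denotes $(x_1,\dots,x_p)$ with the $i$-th block singled out; then set $\lambda^k=\lambda^{k-1}-\theta\beta(\sum_{i=1}^pA_ix_i^k-b)$. Write $x^k=(x_1^k,\dots,x_p^k)$.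 Notation: $\Delta x_i^k:=x_i^k-x_i^{k-1}$, $\Delta\lambda^k:=\lambda^k-\lambda^{k-1}$ for $k\ge1$; $R_p^0:=A_p^*\lambda^0-\nabla f_p(x_p^0)$; conventions $\Delta\lambda^0:=0$, $\Delta x_i^0:=0$ for $i=1,\dots,p-1$, $\Delta x_p^0:=R_p^0/M_p$. Let $c_1:=\frac{2|\theta-1|}{\beta\theta(1-|\theta-1|)\sigma^+_{A_p}}$, $\eta_0:=\frac{m_p}{4M_p^2}\|A_p^*\lambda^0-\nabla f_p(x_p^0)\|^2$, $\eta_k:=\sum_{i=1}^p\frac{m_i}{4}\|\Delta x_i^k\|^2+\frac{c_1}{2}\|A_p^*\Delta\lambda^k\|^2$ for $k\ge1$, and $\hat{\mathcal{L}}_k:=\mathcal{L}_\beta(x^k,\lambda^k)+\eta_k$ for $k\ge0$. *)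

theory Defs
  imports Jordan_Normal_Form.Char_Poly "HOL-Library.Extended_Real"
begin

text \<open>Vectors of R^n are JNF vectors in carrier_vec n; matrices R^(d x n) are in carrier_mat d n.\<close>

definition vnorm :: "real vec \<Rightarrow> real" where
  "vnorm v = sqrt (scalar_prod v v)"

definition opnorm :: "real mat \<Rightarrow> real" where
  "opnorm A = Sup {vnorm (A *\<^sub>v v) | v. v \<in> carrier_vec (dim_col A) \<and> vnorm v \<le> 1}"

definition img :: "real mat \<Rightarrow> real vec set" where
  "img A = (\<lambda>v. A *\<^sub>v v) ` carrier_vec (dim_col A)"

definition sigma_pos :: "real mat \<Rightarrow> real" where
  "sigma_pos A = Min {s. eigenvalue (transpose_mat A * A) s \<and> s > 0}"

definition has_grad :: "nat \<Rightarrow> (real vec \<Rightarrow> real) \<Rightarrow> (real vec \<Rightarrow> real vec) \<Rightarrow> real vec \<Rightarrow> bool" where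
  "has_grad n f g x \<longleftrightarrow> g x \<in> carrier_vec n \<and>
     (\<forall>e>0. \<exists>\<delta>>0. \<forall>y\<in>carrier_vec n. vnorm (y - x) < \<delta> \<longrightarrow>
        \<bar>f y - f x - scalar_prod (g x) (y - x)\<bar> \<le> e * vnorm (y - x))"

definition proper_on :: "nat \<Rightarrow> (real vec \<Rightarrow> ereal) \<Rightarrow> bool" where
  "proper_on n f \<longleftrightarrow> (\<forall>x\<in>carrier_vec n. f x \<noteq> -\<infinity>) \<and> (\<exists>x\<in>carrier_vec n. f x \<noteq> \<infinity>)"

definition lsc_on :: "nat \<Rightarrow> (real vec \<Rightarrow> ereal) \<Rightarrow> bool" where
  "lsc_on n f \<longleftrightarrow> (\<forall>x\<in>carrier_vec n. \<forall>t. t < f x \<longrightarrow>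
      (\<exists>\<delta>>0. \<forall>y\<in>carrier_vec n. vnorm (y - x) < \<delta> \<longrightarrow> t < f y))"

definition edom :: "nat \<Rightarrow> (real vec \<Rightarrow> ereal) \<Rightarrow> real vec set" where
  "edom n f = {x \<in> carrier_vec n. f x < \<infinity>}"

definition dgf :: "nat \<Rightarrow> real vec set \<Rightarrow> real \<Rightarrow> real \<Rightarrow> (real vec \<Rightarrow> real) \<Rightarrow> (real vec \<Rightarrow> real vec) \<Rightarrow> bool" where
  "dgf n Z m M w gw \<longleftrightarrow> (\<forall>z\<in>Z. has_grad n w gw z) \<and>
     (\<forall>z\<in>Z. \<forall>z'\<in>Z. w z' - w z - scalar_prod (gw z) (z' - z) \<ge> m / 2 * (vnorm (z' - z))\<^sup>2) \<and>
     (\<forall>z\<in>Z. \<forall>z'\<in>Z. vnorm (gw z - gw z') \<le> M * vnorm (z - z'))"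

definition breg :: "(real vec \<Rightarrow> real) \<Rightarrow> (real vec \<Rightarrow> real vec) \<Rightarrow> real vec \<Rightarrow> real vec \<Rightarrow> real" where
  "breg w gw z z' = w z' - w z - scalar_prod (gw z) (z' - z)"

definition resid :: "nat \<Rightarrow> nat \<Rightarrow> (nat \<Rightarrow> real mat) \<Rightarrow> real vec \<Rightarrow> (nat \<Rightarrow> real vec) \<Rightarrow> real vec" where
  "resid d p A b x = vec d (\<lambda>j. (\<Sum>i=1..p. (A i *\<^sub>v x i) $ j)) - b"

definition augL :: "nat \<Rightarrow> nat \<Rightarrow> (nat \<Rightarrow> real vec \<Rightarrow> ereal) \<Rightarrow> (nat \<Rightarrow> real mat) \<Rightarrow> real vec \<Rightarrow> real
     \<Rightarrow> (nat \<Rightarrow> real vec) \<Rightarrow> real vec \<Rightarrow> ereal" where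
  "augL d p f A b \<beta> x lam = (\<Sum>i=1..p. f i (x i))
     + ereal (- scalar_prod lam (resid d p A b x) + \<beta> / 2 * (vnorm (resid d p A b x))\<^sup>2)"

definition vval :: "nat \<Rightarrow> nat \<Rightarrow> (nat \<Rightarrow> nat) \<Rightarrow> (nat \<Rightarrow> real vec \<Rightarrow> ereal) \<Rightarrow> (nat \<Rightarrow> real mat) \<Rightarrow> real vec
     \<Rightarrow> real \<Rightarrow> ereal" where
  "vval d p n f A b \<beta> = (INF x\<in>{x. \<forall>i\<in>{1..p}. x i \<in> carrier_vec (n i)}.
      (\<Sum>i=1..p. f i (x i)) + ereal (\<beta> / 2 * (vnorm (resid d p A b x))\<^sup>2))"

definition gamma_th :: "real \<Rightarrow> real" where
  "gamma_th \<theta> = \<theta> / (1 - \<bar>\<theta> - 1\<bar>)\<^sup>2"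

end

theory Submission
  imports Defs "HOL-Analysis.Convex"
begin

text \<open>Each block of the NEPJ-ADMM minimises \<open>L_\<beta>\<close> plus a strongly convex Bregman term with the
  other blocks frozen; testing against the old block shows that every single-block change of the
  Lagrangian is at most \<open>-m_i/2 \<parallel>\<Delta>x_i\<parallel>\<^sup>2\<close>. Since all blocks move at once, the true change of the
  quadratic penalty exceeds the sum of the single-block changes by the cross term
  \<open>\<beta>/2 (\<parallel>\<Sigma> A_i \<Delta>x_i\<parallel>\<^sup>2 - \<Sigma> \<parallel>A_i \<Delta>x_i\<parallel>\<^sup>2)\<close>, which Cauchy-Schwarz among the first \<open>p - 1\<close>
  blocks and Young's inequality with weight \<open>\<alpha>\<close> against block \<open>p\<close> bound by the \<open>\<parallel>A_i\<parallel>\<^sup>2\<close> terms.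
  The multiplier step raises \<open>L_\<beta>\<close> by exactly \<open>\<parallel>\<Delta>\<lambda>\<parallel>\<^sup>2/(\<beta>\<theta>)\<close>. Half of the decrease
  \<open>m_i/2 \<parallel>\<Delta>x_i\<parallel>\<^sup>2\<close> pays for \<open>\<eta>_k\<close>, and \<open>\<eta>_{k-1}\<close> dominates the \<open>\<Delta>x_p^{k-1}\<close> and
  \<open>\<Delta>\<lambda>^{k-1}\<close> terms of the bound; for \<open>k = 1\<close> this is what the conventions for
  \<open>\<Delta>x_p^0\<close> and \<open>\<eta>_0\<close> are designed for.\<close>

lemma square_sum_le_card_mult_sum_squares:
  fixes a :: "'a \<Rightarrow> real"
  shows "(\<Sum>i\<in>I. a i)\<^sup>2 \<le> real (card I) * (\<Sum>i\<in>I. (a i)\<^sup>2)"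
  using Cauchy_Schwarz_ineq_sum[of "\<lambda>_. 1" a I] by simp

lemma two_mult_le_weighted_squares:
  fixes x y a :: real
  assumes "a > 0"
  shows "2 * x * y \<le> a * x\<^sup>2 + y\<^sup>2 / a"
proof -
  have "0 \<le> (a * x - y)\<^sup>2 / a"
    using assms by simp
  also have "\<dots> = a * x\<^sup>2 + y\<^sup>2 / a - 2 * x * y"
    using assms by (simp add: power2_eq_square field_simps)
  finally show ?thesis
    by simp
qed

lemma square_sum_minus_sum_squares_le:
  fixes a :: "nat \<Rightarrow> real"
  assumes "p \<ge> 2" and "\<alpha> > 0"
  shows "(\<Sum>i=1..p. a i)\<^sup>2 - (\<Sum>i=1..p. (a i)\<^sup>2)
     \<le> (real p - 2 + \<alpha>) * (\<Sum>i=1..<p. (a i)\<^sup>2) + (real p - 1) / \<alpha> * (a p)\<^sup>2"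
proof -
  define V where "V = (\<Sum>i=1..<p. a i)"
  define Q where "Q = (\<Sum>i=1..<p. (a i)\<^sup>2)"
  have split: "{1..p} = insert p {1..<p}" and card: "real (card {1..<p}) = real p - 1"
    using assms(1) by auto
  have "V\<^sup>2 \<le> (real p - 1) * Q"
    unfolding V_def Q_def card[symmetric] by (rule square_sum_le_card_mult_sum_squares)
  moreover have "2 * V * a p \<le> \<alpha> * Q + (real p - 1) * (a p)\<^sup>2 / \<alpha>"
  proof -
    have "2 * V * a p = (\<Sum>i=1..<p. 2 * a i * a p)"
      unfolding V_def by (simp add: sum_distrib_left sum_distrib_right)
    also have "\<dots> \<le> (\<Sum>i=1..<p. \<alpha> * (a i)\<^sup>2 + (a p)\<^sup>2 / \<alpha>)"
      by (intro sum_mono two_mult_le_weighted_squares assms(2))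
    also have "\<dots> = \<alpha> * Q + (real p - 1) * (a p)\<^sup>2 / \<alpha>"
      unfolding Q_def using card by (simp add: sum.distrib sum_distrib_left)
    finally show ?thesis .
  qed
  moreover have "(\<Sum>i=1..p. a i)\<^sup>2 - (\<Sum>i=1..p. (a i)\<^sup>2) = V\<^sup>2 + 2 * V * a p - Q"
    unfolding V_def Q_def split by (simp add: power2_eq_square algebra_simps)
  ultimately show ?thesis
    unfolding Q_def by (simp add: algebra_simps)
qed

lemma sum_fun_upd:
  fixes F :: "'a \<Rightarrow> real"
  assumes "finite S" and "i \<in> S"
  shows "sum (F(i := v)) S = sum F S - F i + v"
  using sum.remove[OF assms, of "F(i := v)"] sum.remove[OF assms, of F] by simp

lemma scalar_prod_eq_sum: "w \<in> carrier_vec d \<Longrightarrow> v \<bullet> w = (\<Sum>j<d. v $ j * w $ j)"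
  by (simp add: scalar_prod_def atLeast0LessThan)

lemma vnorm_nonneg: "vnorm v \<ge> 0"
  unfolding vnorm_def scalar_prod_def by (simp add: sum_nonneg)

lemma vnorm_square: "v \<in> carrier_vec d \<Longrightarrow> (vnorm v)\<^sup>2 = (\<Sum>j<d. (v $ j)\<^sup>2)"
  unfolding vnorm_def by (simp add: scalar_prod_eq_sum sum_nonneg power2_eq_square)

lemma vnorm_square_eq_scalar_prod: "(vnorm v)\<^sup>2 = v \<bullet> v"
  unfolding vnorm_def scalar_prod_def by (simp add: sum_nonneg power2_eq_square[symmetric])

lemma vnorm_smult: "vnorm (c \<cdot>\<^sub>v v) = \<bar>c\<bar> * vnorm v"
  unfolding vnorm_def by (simp add: real_sqrt_mult real_sqrt_abs2)

lemma vnorm_zero_vec: "vnorm (0\<^sub>v d) = 0"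
  unfolding vnorm_def by simp

lemma vnorm_square_sum_minus_sum_squares:
  assumes u: "\<And>i. i \<in> I \<Longrightarrow> u i \<in> carrier_vec d"
  shows "(vnorm (vec d (\<lambda>j. \<Sum>i\<in>I. u i $ j)))\<^sup>2 - (\<Sum>i\<in>I. (vnorm (u i))\<^sup>2)
      = (\<Sum>j<d. (\<Sum>i\<in>I. u i $ j)\<^sup>2 - (\<Sum>i\<in>I. (u i $ j)\<^sup>2))"
proof -
  have "(\<Sum>i\<in>I. (vnorm (u i))\<^sup>2) = (\<Sum>i\<in>I. \<Sum>j<d. (u i $ j)\<^sup>2)"
    using u by (intro sum.cong) (simp_all add: vnorm_square)
  then show ?thesis
    by (simp add: vnorm_square[of _ d] sum_subtractf sum.swap[of _ I])
qed

lemma vnorm_square_sum_minus_sum_squares_le: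
  assumes "p \<ge> 2" and "\<alpha> > 0" and u: "\<And>i. i \<in> {1..p} \<Longrightarrow> u i \<in> carrier_vec d"
  shows "(vnorm (vec d (\<lambda>j. \<Sum>i=1..p. u i $ j)))\<^sup>2 - (\<Sum>i=1..p. (vnorm (u i))\<^sup>2)
     \<le> (real p - 2 + \<alpha>) * (\<Sum>i=1..<p. (vnorm (u i))\<^sup>2) + (real p - 1) / \<alpha> * (vnorm (u p))\<^sup>2"
proof -
  have "(\<Sum>j<d. (\<Sum>i=1..p. u i $ j)\<^sup>2 - (\<Sum>i=1..p. (u i $ j)\<^sup>2))
      \<le> (\<Sum>j<d. (real p - 2 + \<alpha>) * (\<Sum>i=1..<p. (u i $ j)\<^sup>2) + (real p - 1) / \<alpha> * (u p $ j)\<^sup>2)"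
    by (intro sum_mono square_sum_minus_sum_squares_le assms(1,2))
  also have "\<dots> = (real p - 2 + \<alpha>) * (\<Sum>i=1..<p. (vnorm (u i))\<^sup>2) + (real p - 1) / \<alpha> * (vnorm (u p))\<^sup>2"
  proof -
    have "(\<Sum>i=1..<p. (vnorm (u i))\<^sup>2) = (\<Sum>i=1..<p. \<Sum>j<d. (u i $ j)\<^sup>2)"
      using u by (intro sum.cong) (simp_all add: vnorm_square)
    moreover have "(vnorm (u p))\<^sup>2 = (\<Sum>j<d. (u p $ j)\<^sup>2)"
      using u assms(1) by (simp add: vnorm_square)
    ultimately show ?thesis
      by (simp add: sum.distrib sum_distrib_left) (rule sum.swap)
  qed
  finally show ?thesis
    using vnorm_square_sum_minus_sum_squares[where I = "{1..p}" and u = u, OF u] by simp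
qed

lemma mult_mat_vec_index_eq_sum:
  assumes "A \<in> carrier_mat d n" and "v \<in> carrier_vec n" and "j < d"
  shows "(A *\<^sub>v v) $ j = (\<Sum>k<n. A $$ (j, k) * v $ k)"
  using assms by (simp add: scalar_prod_eq_sum)

text \<open>The Frobenius norm is a bound, so \<open>opnorm\<close> is a genuine supremum and not the junk value of
  \<open>Sup\<close> on an unbounded set.\<close>
lemma opnorm_set_bdd_above:
  assumes A: "A \<in> carrier_mat d n"
  shows "bdd_above {vnorm (A *\<^sub>v v) | v. v \<in> carrier_vec (dim_col A) \<and> vnorm v \<le> 1}"
proof -
  have "vnorm (A *\<^sub>v v) \<le> sqrt (\<Sum>j<d. \<Sum>k<n. (A $$ (j, k))\<^sup>2)"
    if "v \<in> carrier_vec (dim_col A)" and "vnorm v \<le> 1" for v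
  proof -
    have vc: "v \<in> carrier_vec n" and "(vnorm v)\<^sup>2 \<le> 1"
      using that A vnorm_nonneg[of v] by (auto simp: power_le_one)
    then have v1: "(\<Sum>k<n. (v $ k)\<^sup>2) \<le> 1"
      by (simp add: vnorm_square)
    have "(vnorm (A *\<^sub>v v))\<^sup>2 = (\<Sum>j<d. (\<Sum>k<n. A $$ (j, k) * v $ k)\<^sup>2)"
      using A vc by (simp add: vnorm_square[of _ d] mult_mat_vec_index_eq_sum del: index_mult_mat_vec)
    also have "\<dots> \<le> (\<Sum>j<d. (\<Sum>k<n. (A $$ (j, k))\<^sup>2) * (\<Sum>k<n. (v $ k)\<^sup>2))"
      by (intro sum_mono Cauchy_Schwarz_ineq_sum)
    also have "\<dots> \<le> (\<Sum>j<d. \<Sum>k<n. (A $$ (j, k))\<^sup>2)"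
      using v1 by (intro sum_mono) (simp add: mult_left_le sum_nonneg)
    finally show ?thesis
      using vnorm_nonneg by (simp add: real_le_rsqrt)
  qed
  then show ?thesis
    by (intro bdd_aboveI) blast
qed

lemma vnorm_mult_mat_vec_le:
  assumes A: "A \<in> carrier_mat d n" and v: "v \<in> carrier_vec n"
  shows "vnorm (A *\<^sub>v v) \<le> opnorm A * vnorm v"
proof (cases "vnorm v = 0")
  case True
  then have "v = 0\<^sub>v n"
    using v by (auto simp: vnorm_def scalar_prod_eq_sum[OF v] sum_nonneg_eq_0_iff
        power2_eq_square[symmetric] intro!: eq_vecI)
  then have "A *\<^sub>v v = 0\<^sub>v d"
    using A by (auto intro!: eq_vecI)
  then show ?thesis
    using True by (simp add: vnorm_zero_vec)
next
  case False
  then have pos: "vnorm v > 0"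
    using vnorm_nonneg[of v] by simp
  define e where "e = (1 / vnorm v) \<cdot>\<^sub>v v"
  have "vnorm (A *\<^sub>v e) \<le> opnorm A"
    unfolding opnorm_def
  proof (rule cSup_upper[OF _ opnorm_set_bdd_above[OF A]])
    show "vnorm (A *\<^sub>v e) \<in> {vnorm (A *\<^sub>v v) | v. v \<in> carrier_vec (dim_col A) \<and> vnorm v \<le> 1}"
      using A v pos by (auto simp: e_def vnorm_smult)
  qed
  moreover have "A *\<^sub>v e = (1 / vnorm v) \<cdot>\<^sub>v (A *\<^sub>v v)"
    using A v by (simp add: e_def mult_mat_vec)
  ultimately show ?thesis
    using pos by (simp add: vnorm_smult divide_le_eq mult.commute)
qed

lemma vnorm_square_mult_mat_vec_le:
  assumes "A \<in> carrier_mat d n" and "v \<in> carrier_vec n"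
  shows "(vnorm (A *\<^sub>v v))\<^sup>2 \<le> (opnorm A)\<^sup>2 * (vnorm v)\<^sup>2"
  using power_mono[OF vnorm_mult_mat_vec_le[OF assms] vnorm_nonneg, of 2]
  by (simp add: power_mult_distrib)

lemma breg_self: "breg w gw z z = 0"
  unfolding breg_def scalar_prod_def by (auto intro: sum.neutral)

lemma dgf_breg_ge:
  assumes "dgf n Z m M w gw" and "z \<in> Z" and "z' \<in> Z"
  shows "m / 2 * (vnorm (z' - z))\<^sup>2 \<le> breg w gw z z'"
  using assms unfolding dgf_def breg_def by blast

lemma resid_carrier: "b \<in> carrier_vec d \<Longrightarrow> resid d p A b x \<in> carrier_vec d"
  unfolding resid_def by simp

lemma resid_update:
  assumes b: "b \<in> carrier_vec d" and A: "\<And>i. i \<in> {1..p} \<Longrightarrow> A i \<in> carrier_mat d (n i)"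
    and X: "\<And>i. i \<in> {1..p} \<Longrightarrow> X i \<in> carrier_vec (n i)"
    and Y: "\<And>i. i \<in> {1..p} \<Longrightarrow> Y i \<in> carrier_vec (n i)"
  shows "resid d p A b Y = resid d p A b X + vec d (\<lambda>j. \<Sum>i=1..p. (A i *\<^sub>v (Y i - X i)) $ j)"
proof (rule eq_vecI)
  fix j assume "j < dim_vec (resid d p A b X + vec d (\<lambda>j. \<Sum>i=1..p. (A i *\<^sub>v (Y i - X i)) $ j))"
  then have j: "j < d"
    by (simp add: resid_def)
  have "(A i *\<^sub>v Y i) $ j = (A i *\<^sub>v X i) $ j + (A i *\<^sub>v (Y i - X i)) $ j" if "i \<in> {1..p}" for i
    using A[OF that] X[OF that] Y[OF that] j by (simp add: mult_minus_distrib_mat_vec)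
  then show "resid d p A b Y $ j = (resid d p A b X + vec d (\<lambda>j. \<Sum>i=1..p. (A i *\<^sub>v (Y i - X i)) $ j)) $ j"
    using b j by (simp add: resid_def sum.distrib)
qed (use b in \<open>simp add: resid_def\<close>)

lemma resid_fun_upd:
  assumes b: "b \<in> carrier_vec d" and A: "\<And>i. i \<in> {1..p} \<Longrightarrow> A i \<in> carrier_mat d (n i)"
    and X: "\<And>i. i \<in> {1..p} \<Longrightarrow> X i \<in> carrier_vec (n i)"
    and i: "i \<in> {1..p}" and y: "y \<in> carrier_vec (n i)"
  shows "resid d p A b (X(i := y)) = resid d p A b X + A i *\<^sub>v (y - X i)"
proof -
  have "(A i' *\<^sub>v ((X(i := y)) i' - X i')) $ j = (if i' = i then (A i *\<^sub>v (y - X i)) $ j else 0)"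
    if "i' \<in> {1..p}" and "j < d" for i' j
    using A[OF that(1)] X[OF that(1)] that(2) by auto
  then have "vec d (\<lambda>j. \<Sum>i'=1..p. (A i' *\<^sub>v ((X(i := y)) i' - X i')) $ j) = A i *\<^sub>v (y - X i)"
    using A[OF i] i by (auto intro!: eq_vecI)
  moreover have "resid d p A b (X(i := y)) = resid d p A b X
      + vec d (\<lambda>j. \<Sum>i'=1..p. (A i' *\<^sub>v ((X(i := y)) i' - X i')) $ j)"
    by (rule resid_update[OF b A X]) (use X y in auto)
  ultimately show ?thesis
    by simp
qed

definition aug_penalty :: "real \<Rightarrow> real vec \<Rightarrow> real vec \<Rightarrow> real" where
  "aug_penalty \<beta> l r = - (l \<bullet> r) + \<beta> / 2 * (vnorm r)\<^sup>2"

lemma augL_eq_aug_penalty: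
  "augL d p f A b \<beta> x l = (\<Sum>i=1..p. f i (x i)) + ereal (aug_penalty \<beta> l (resid d p A b x))"
  by (simp add: augL_def aug_penalty_def)

lemma aug_penalty_eq_sum:
  "r \<in> carrier_vec d \<Longrightarrow> aug_penalty \<beta> l r = (\<Sum>j<d. - l $ j * r $ j + \<beta> / 2 * (r $ j)\<^sup>2)"
  by (simp add: aug_penalty_def scalar_prod_eq_sum vnorm_square sum_subtractf sum_negf sum_distrib_left)

lemma aug_penalty_multiplier_step:
  assumes "l \<in> carrier_vec d" and "r \<in> carrier_vec d"
  shows "aug_penalty \<beta> (l - c \<cdot>\<^sub>v r) r = aug_penalty \<beta> l r + c * (vnorm r)\<^sup>2"
  using assms by (simp add: aug_penalty_def vnorm_square_eq_scalar_prod minus_scalar_prod_distrib)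

lemma aug_penalty_add_sum:
  assumes r: "r \<in> carrier_vec d" and u: "\<And>i. i \<in> I \<Longrightarrow> u i \<in> carrier_vec d"
  shows "aug_penalty \<beta> l (r + vec d (\<lambda>j. \<Sum>i\<in>I. u i $ j)) - aug_penalty \<beta> l r
    = (\<Sum>i\<in>I. aug_penalty \<beta> l (r + u i) - aug_penalty \<beta> l r)
      + \<beta> / 2 * ((vnorm (vec d (\<lambda>j. \<Sum>i\<in>I. u i $ j)))\<^sup>2 - (\<Sum>i\<in>I. (vnorm (u i))\<^sup>2))"
proof -
  define q where "q j t = - l $ j * t + \<beta> / 2 * t\<^sup>2" for j t
  have coordinate: "q j (r $ j + (\<Sum>i\<in>I. u i $ j)) - q j (r $ j)
      = (\<Sum>i\<in>I. q j (r $ j + u i $ j) - q j (r $ j))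
        + \<beta> / 2 * ((\<Sum>i\<in>I. u i $ j)\<^sup>2 - (\<Sum>i\<in>I. (u i $ j)\<^sup>2))" for j
  proof -
    have "(\<Sum>i\<in>I. q j (r $ j + u i $ j) - q j (r $ j))
        = (\<Sum>i\<in>I. (\<beta> * r $ j - l $ j) * u i $ j + \<beta> / 2 * (u i $ j)\<^sup>2)"
      by (intro sum.cong) (simp_all add: q_def power2_eq_square algebra_simps)
    also have "\<dots> = (\<beta> * r $ j - l $ j) * (\<Sum>i\<in>I. u i $ j) + \<beta> / 2 * (\<Sum>i\<in>I. (u i $ j)\<^sup>2)"
      by (simp add: sum.distrib sum_distrib_left)
    finally show ?thesis
      by (simp add: q_def power2_eq_square algebra_simps)
  qed
  have blocks: "(\<Sum>i\<in>I. aug_penalty \<beta> l (r + u i) - aug_penalty \<beta> l r)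
      = (\<Sum>j<d. \<Sum>i\<in>I. q j (r $ j + u i $ j) - q j (r $ j))"
  proof -
    have "aug_penalty \<beta> l (r + u i) = (\<Sum>j<d. q j (r $ j + u i $ j))" if "i \<in> I" for i
      using r u[OF that] by (auto simp: aug_penalty_eq_sum[of _ d] q_def intro!: sum.cong)
    then show ?thesis
      using r by (subst sum.swap) (simp add: aug_penalty_eq_sum[of _ d] q_def sum_subtractf)
  qed
  have "aug_penalty \<beta> l (r + vec d (\<lambda>j. \<Sum>i\<in>I. u i $ j)) - aug_penalty \<beta> l r
      = (\<Sum>j<d. q j (r $ j + (\<Sum>i\<in>I. u i $ j)) - q j (r $ j))"
    using r by (simp add: aug_penalty_eq_sum[of _ d] q_def sum_subtractf)
  also have "\<dots> = (\<Sum>j<d. \<Sum>i\<in>I. q j (r $ j + u i $ j) - q j (r $ j))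
      + \<beta> / 2 * (\<Sum>j<d. (\<Sum>i\<in>I. u i $ j)\<^sup>2 - (\<Sum>i\<in>I. (u i $ j)\<^sup>2))"
    by (simp add: coordinate sum.distrib sum_distrib_left)
  finally show ?thesis
    using blocks vnorm_square_sum_minus_sum_squares[where u = u, OF u] by simp
qed

lemma aug_penalty_jacobi_le:
  assumes p2: "p \<ge> 2" and alpha: "\<alpha> > 0" and beta: "\<beta> \<ge> 0" and r: "r \<in> carrier_vec d"
    and A: "\<And>i. i \<in> {1..p} \<Longrightarrow> A i \<in> carrier_mat d (n i)"
    and v: "\<And>i. i \<in> {1..p} \<Longrightarrow> v i \<in> carrier_vec (n i)"
  shows "aug_penalty \<beta> l (r + vec d (\<lambda>j. \<Sum>i=1..p. (A i *\<^sub>v v i) $ j)) - aug_penalty \<beta> l r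
    \<le> (\<Sum>i=1..p. aug_penalty \<beta> l (r + A i *\<^sub>v v i) - aug_penalty \<beta> l r)
      + \<beta> / 2 * ((real p - 2 + \<alpha>) * (\<Sum>i=1..<p. (opnorm (A i))\<^sup>2 * (vnorm (v i))\<^sup>2)
        + (real p - 1) / \<alpha> * ((opnorm (A p))\<^sup>2 * (vnorm (v p))\<^sup>2))"
proof -
  define u where "u i = A i *\<^sub>v v i" for i
  have u: "u i \<in> carrier_vec d" if "i \<in> {1..p}" for i
    using A[OF that] by (simp add: u_def carrier_vecI)
  have norm_u: "(vnorm (u i))\<^sup>2 \<le> (opnorm (A i))\<^sup>2 * (vnorm (v i))\<^sup>2" if "i \<in> {1..p}" for i
    unfolding u_def using A[OF that] v[OF that] by (rule vnorm_square_mult_mat_vec_le)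
  have "(real p - 2 + \<alpha>) * (\<Sum>i=1..<p. (vnorm (u i))\<^sup>2) + (real p - 1) / \<alpha> * (vnorm (u p))\<^sup>2
      \<le> (real p - 2 + \<alpha>) * (\<Sum>i=1..<p. (opnorm (A i))\<^sup>2 * (vnorm (v i))\<^sup>2)
        + (real p - 1) / \<alpha> * ((opnorm (A p))\<^sup>2 * (vnorm (v p))\<^sup>2)"
    using p2 alpha by (intro add_mono mult_left_mono sum_mono norm_u) auto
  with vnorm_square_sum_minus_sum_squares_le[where u = u, OF p2 alpha u]
  have "\<beta> / 2 * ((vnorm (vec d (\<lambda>j. \<Sum>i=1..p. u i $ j)))\<^sup>2 - (\<Sum>i=1..p. (vnorm (u i))\<^sup>2))
      \<le> \<beta> / 2 * ((real p - 2 + \<alpha>) * (\<Sum>i=1..<p. (opnorm (A i))\<^sup>2 * (vnorm (v i))\<^sup>2)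
        + (real p - 1) / \<alpha> * ((opnorm (A p))\<^sup>2 * (vnorm (v p))\<^sup>2))"
    using beta by (intro mult_left_mono) auto
  then show ?thesis
    using aug_penalty_add_sum[where I = "{1..p}" and u = u, OF r u] unfolding u_def by simp
qed

lemma augL_finite_imp_block_real:
  assumes "augL d p f A b \<beta> x l \<noteq> \<infinity>" and "i \<in> {1..p}" and "f i (x i) \<noteq> -\<infinity>"
  shows "f i (x i) = ereal (real_of_ereal (f i (x i)))"
proof -
  have "f i (x i) \<noteq> \<infinity>"
    using assms(1,2) by (auto simp: augL_eq_aug_penalty sum_Pinfty)
  with assms(3) show ?thesis
    by (cases "f i (x i)") auto
qed

lemma augL_eq_ereal:
  assumes "\<And>i. i \<in> {1..p} \<Longrightarrow> f i (x i) = ereal (F i)"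
  shows "augL d p f A b \<beta> x l = ereal (sum F {1..p} + aug_penalty \<beta> l (resid d p A b x))"
  using assms by (simp add: augL_eq_aug_penalty)

lemma augL_block_step_le:
  assumes b: "b \<in> carrier_vec d" and A: "\<And>i. i \<in> {1..p} \<Longrightarrow> A i \<in> carrier_mat d (n i)"
    and X: "\<And>i. i \<in> {1..p} \<Longrightarrow> X i \<in> carrier_vec (n i)"
    and i: "i \<in> {1..p}" and y: "y \<in> carrier_vec (n i)"
    and F: "\<And>i. i \<in> {1..p} \<Longrightarrow> f i (X i) = ereal (F i)" and Fy: "f i y = ereal Fy"
    and dgf: "dgf (n i) (edom (n i) (f i)) mi Mi wi gwi"
    and opt: "augL d p f A b \<beta> (X(i := y)) l + ereal (breg wi gwi (X i) y) \<le> augL d p f A b \<beta> X l"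
  shows "Fy - F i + (aug_penalty \<beta> l (resid d p A b X + A i *\<^sub>v (y - X i)) - aug_penalty \<beta> l (resid d p A b X))
      + mi / 2 * (vnorm (y - X i))\<^sup>2 \<le> 0"
proof -
  have "augL d p f A b \<beta> (X(i := y)) l
      = ereal (sum (F(i := Fy)) {1..p} + aug_penalty \<beta> l (resid d p A b (X(i := y))))"
    by (rule augL_eq_ereal) (use F Fy in auto)
  also have "sum (F(i := Fy)) {1..p} = sum F {1..p} - F i + Fy"
    by (rule sum_fun_upd) (use i in auto)
  also have "resid d p A b (X(i := y)) = resid d p A b X + A i *\<^sub>v (y - X i)"
    by (rule resid_fun_upd[OF b]) (use A X i y in auto)
  finally have "augL d p f A b \<beta> (X(i := y)) l = ereal (sum F {1..p} - F i + Fy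
      + aug_penalty \<beta> l (resid d p A b X + A i *\<^sub>v (y - X i)))" .
  moreover have "augL d p f A b \<beta> X l = ereal (sum F {1..p} + aug_penalty \<beta> l (resid d p A b X))"
    by (rule augL_eq_ereal) (use F in auto)
  moreover have "mi / 2 * (vnorm (y - X i))\<^sup>2 \<le> breg wi gwi (X i) y"
    by (rule dgf_breg_ge[OF dgf]) (use X[OF i] y F[OF i] Fy in \<open>auto simp: edom_def\<close>)
  ultimately show ?thesis
    using opt by simp
qed

lemma augL_jacobi_step_le:
  assumes p2: "p \<ge> 2" and alpha: "\<alpha> > 0" and beta: "\<beta> \<ge> 0"
    and b: "b \<in> carrier_vec d" and A: "\<And>i. i \<in> {1..p} \<Longrightarrow> A i \<in> carrier_mat d (n i)"
    and X: "\<And>i. i \<in> {1..p} \<Longrightarrow> X i \<in> carrier_vec (n i)"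
    and X': "\<And>i. i \<in> {1..p} \<Longrightarrow> X' i \<in> carrier_vec (n i)"
    and proper: "\<And>i y. i \<in> {1..p} \<Longrightarrow> y \<in> carrier_vec (n i) \<Longrightarrow> f i y \<noteq> -\<infinity>"
    and dgf: "\<And>i. i \<in> {1..p} \<Longrightarrow> dgf (n i) (edom (n i) (f i)) (m i) (M i) (w i) (gw i)"
    and opt: "\<And>i. i \<in> {1..p} \<Longrightarrow>
      augL d p f A b \<beta> (X(i := X' i)) l + ereal (breg (w i) (gw i) (X i) (X' i)) \<le> augL d p f A b \<beta> X l"
  shows "augL d p f A b \<beta> X' l + ereal (\<Sum>i=1..p. m i / 2 * (vnorm (X' i - X i))\<^sup>2)
    \<le> augL d p f A b \<beta> X l + ereal (\<beta> / 2 * ((real p - 2 + \<alpha>) * (\<Sum>i=1..<p. (opnorm (A i))\<^sup>2 * (vnorm (X' i - X i))\<^sup>2)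
        + (real p - 1) / \<alpha> * ((opnorm (A p))\<^sup>2 * (vnorm (X' p - X p))\<^sup>2)))"
proof (cases "augL d p f A b \<beta> X l = \<infinity>")
  case True
  then show ?thesis
    by simp
next
  case False
  define r where "r = resid d p A b X"
  define F where "F i = real_of_ereal (f i (X i))" for i
  define F' where "F' i = real_of_ereal (f i (X' i))" for i
  have F: "f i (X i) = ereal (F i)" if "i \<in> {1..p}" for i
    unfolding F_def by (rule augL_finite_imp_block_real[OF False that proper[OF that X[OF that]]])
  have F': "f i (X' i) = ereal (F' i)" if i: "i \<in> {1..p}" for i
  proof -
    have "augL d p f A b \<beta> (X(i := X' i)) l \<noteq> \<infinity>"
      using opt[OF i] False by auto
    from augL_finite_imp_block_real[OF this i] show ?thesis
      using proper[OF i X'[OF i]] by (simp add: F'_def)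
  qed
  have block: "F' i - F i + (aug_penalty \<beta> l (r + A i *\<^sub>v (X' i - X i)) - aug_penalty \<beta> l r)
      + m i / 2 * (vnorm (X' i - X i))\<^sup>2 \<le> 0" if i: "i \<in> {1..p}" for i
    unfolding r_def
    by (rule augL_block_step_le[where A = A and n = n and X = X and f = f and F = F,
          OF b A X i X'[OF i] F F'[OF i] dgf[OF i] opt[OF i]])
  have "(\<Sum>i=1..p. F' i) - (\<Sum>i=1..p. F i) + (\<Sum>i=1..p. aug_penalty \<beta> l (r + A i *\<^sub>v (X' i - X i)) - aug_penalty \<beta> l r)
      + (\<Sum>i=1..p. m i / 2 * (vnorm (X' i - X i))\<^sup>2) \<le> 0"
    using sum_nonpos[of "{1..p}", OF block] by (simp add: sum.distrib sum_subtractf)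
  moreover have "aug_penalty \<beta> l (r + vec d (\<lambda>j. \<Sum>i=1..p. (A i *\<^sub>v (X' i - X i)) $ j)) - aug_penalty \<beta> l r
      \<le> (\<Sum>i=1..p. aug_penalty \<beta> l (r + A i *\<^sub>v (X' i - X i)) - aug_penalty \<beta> l r)
        + \<beta> / 2 * ((real p - 2 + \<alpha>) * (\<Sum>i=1..<p. (opnorm (A i))\<^sup>2 * (vnorm (X' i - X i))\<^sup>2)
        + (real p - 1) / \<alpha> * ((opnorm (A p))\<^sup>2 * (vnorm (X' p - X p))\<^sup>2))"
    unfolding r_def by (rule aug_penalty_jacobi_le[OF p2 alpha beta resid_carrier[OF b] A]) (use X X' in auto)
  moreover have "augL d p f A b \<beta> X l = ereal (sum F {1..p} + aug_penalty \<beta> l r)"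
    unfolding r_def by (rule augL_eq_ereal) (use F in auto)
  moreover have "augL d p f A b \<beta> X' l = ereal (sum F' {1..p} + aug_penalty \<beta> l (resid d p A b X'))"
    by (rule augL_eq_ereal) (use F' in auto)
  moreover have "resid d p A b X' = r + vec d (\<lambda>j. \<Sum>i=1..p. (A i *\<^sub>v (X' i - X i)) $ j)"
    unfolding r_def by (rule resid_update[OF b]) (use A X X' in auto)
  ultimately show ?thesis
    by simp
qed

lemma augL_multiplier_update:
  assumes b: "b \<in> carrier_vec d" and l: "l \<in> carrier_vec d" and c: "c \<noteq> 0"
    and l': "l' = l - c \<cdot>\<^sub>v resid d p A b x"
  shows "augL d p f A b \<beta> x l' = augL d p f A b \<beta> x l + ereal ((vnorm (l' - l))\<^sup>2 / c)"
proof -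
  define r where "r = resid d p A b x"
  have r: "r \<in> carrier_vec d"
    unfolding r_def by (rule resid_carrier[OF b])
  have "l' - l = (- c) \<cdot>\<^sub>v r"
    unfolding l' r_def using l r by (intro eq_vecI) (auto simp: r_def)
  then have "(vnorm (l' - l))\<^sup>2 / c = c * (vnorm r)\<^sup>2"
    using c by (simp add: vnorm_smult power_mult_distrib) (simp add: power2_eq_square)
  then show ?thesis
    using aug_penalty_multiplier_step[OF l r, of \<beta> c]
    by (simp add: augL_eq_aug_penalty l' r_def add.assoc)
qed

lemma augL_nepj_step_le:
  assumes p2: "p \<ge> 2" and alpha: "\<alpha> > 0" and beta: "\<beta> > 0" and theta: "\<theta> > 0"
    and b: "b \<in> carrier_vec d" and A: "\<And>i. i \<in> {1..p} \<Longrightarrow> A i \<in> carrier_mat d (n i)"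
    and X: "\<And>i. i \<in> {1..p} \<Longrightarrow> X i \<in> carrier_vec (n i)"
    and X': "\<And>i. i \<in> {1..p} \<Longrightarrow> X' i \<in> carrier_vec (n i)"
    and proper: "\<And>i y. i \<in> {1..p} \<Longrightarrow> y \<in> carrier_vec (n i) \<Longrightarrow> f i y \<noteq> -\<infinity>"
    and dgf: "\<And>i. i \<in> {1..p} \<Longrightarrow> dgf (n i) (edom (n i) (f i)) (m i) (M i) (w i) (gw i)"
    and opt: "\<And>i. i \<in> {1..p} \<Longrightarrow>
      augL d p f A b \<beta> (X(i := X' i)) l + ereal (breg (w i) (gw i) (X i) (X' i)) \<le> augL d p f A b \<beta> X l"
    and l: "l \<in> carrier_vec d" and l': "l' = l - (\<theta> * \<beta>) \<cdot>\<^sub>v resid d p A b X'"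
  shows "augL d p f A b \<beta> X' l' + ereal (\<Sum>i=1..p. m i / 4 * (vnorm (X' i - X i))\<^sup>2)
    \<le> augL d p f A b \<beta> X l
      + ereal ((\<Sum>i=1..<p. ((real p - 2 + \<alpha>) * \<beta> * (opnorm (A i))\<^sup>2 / 2 - m i / 4) * (vnorm (X' i - X i))\<^sup>2)
        + ((real p - 1) * \<beta> * (opnorm (A p))\<^sup>2 / (2 * \<alpha>) - m p / 4) * (vnorm (X' p - X p))\<^sup>2
        + 1 / (\<beta> * \<theta>) * (vnorm (l' - l))\<^sup>2)"
proof -
  define D where "D i = (vnorm (X' i - X i))\<^sup>2" for i
  define B where "B = \<beta> / 2 * ((real p - 2 + \<alpha>) * (\<Sum>i=1..<p. (opnorm (A i))\<^sup>2 * D i)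
      + (real p - 1) / \<alpha> * ((opnorm (A p))\<^sup>2 * D p))"
  define q where "q = (vnorm (l' - l))\<^sup>2 / (\<theta> * \<beta>)"
  have split: "{1..p} = insert p {1..<p}"
    using p2 by auto
  have primal: "augL d p f A b \<beta> X' l + ereal (\<Sum>i=1..p. m i / 2 * D i) \<le> augL d p f A b \<beta> X l + ereal B"
    unfolding D_def B_def
    by (rule augL_jacobi_step_le[OF p2 alpha _ b A X X' proper dgf opt]) (use beta in simp)
  have dual: "augL d p f A b \<beta> X' l' = augL d p f A b \<beta> X' l + ereal q"
    unfolding q_def using beta theta by (intro augL_multiplier_update[OF b l _ l']) simp
  have "augL d p f A b \<beta> X' l' + ereal (\<Sum>i=1..p. m i / 4 * D i)
      = (augL d p f A b \<beta> X' l + ereal (\<Sum>i=1..p. m i / 2 * D i)) + ereal (q - (\<Sum>i=1..p. m i / 4 * D i))"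
  proof -
    have "(\<Sum>i=1..p. m i / 2 * D i) = 2 * (\<Sum>i=1..p. m i / 4 * D i)"
      by (simp add: sum_distrib_left mult.commute)
    then show ?thesis
      unfolding dual by (cases "augL d p f A b \<beta> X' l") simp_all
  qed
  also have "\<dots> \<le> (augL d p f A b \<beta> X l + ereal B) + ereal (q - (\<Sum>i=1..p. m i / 4 * D i))"
    by (rule add_right_mono[OF primal])
  also have "\<dots> = augL d p f A b \<beta> X l + ereal (B + (q - (\<Sum>i=1..p. m i / 4 * D i)))"
    by (cases "augL d p f A b \<beta> X l") simp_all
  also have "B + (q - (\<Sum>i=1..p. m i / 4 * D i))
      = (\<Sum>i=1..<p. ((real p - 2 + \<alpha>) * \<beta> * (opnorm (A i))\<^sup>2 / 2 - m i / 4) * D i)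
        + ((real p - 1) * \<beta> * (opnorm (A p))\<^sup>2 / (2 * \<alpha>) - m p / 4) * D p
        + 1 / (\<beta> * \<theta>) * (vnorm (l' - l))\<^sup>2"
  proof -
    have "B = (\<Sum>i=1..<p. (real p - 2 + \<alpha>) * \<beta> * (opnorm (A i))\<^sup>2 / 2 * D i)
        + (real p - 1) * \<beta> * (opnorm (A p))\<^sup>2 / (2 * \<alpha>) * D p"
      unfolding B_def distrib_left sum_distrib_left by (simp add: mult_ac)
    moreover have "(\<Sum>i=1..<p. ((real p - 2 + \<alpha>) * \<beta> * (opnorm (A i))\<^sup>2 / 2 - m i / 4) * D i)
        = (\<Sum>i=1..<p. (real p - 2 + \<alpha>) * \<beta> * (opnorm (A i))\<^sup>2 / 2 * D i) - (\<Sum>i=1..<p. m i / 4 * D i)"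
      by (simp add: left_diff_distrib sum_subtractf)
    moreover have "(\<Sum>i=1..p. m i / 4 * D i) = (\<Sum>i=1..<p. m i / 4 * D i) + m p / 4 * D p"
      unfolding split by simp
    moreover have "q = 1 / (\<beta> * \<theta>) * (vnorm (l' - l))\<^sup>2"
      unfolding q_def by (simp add: mult.commute)
    ultimately show ?thesis
      by (simp add: left_diff_distrib)
  qed
  finally show ?thesis
    unfolding D_def by (simp add: add.assoc)
qed

lemma nepj_admm_iterate_le:
  assumes p2: "p \<ge> 2" and alpha: "\<alpha> > 0" and beta: "\<beta> > 0" and theta: "\<theta> > 0"
    and b: "b \<in> carrier_vec d" and A: "\<And>i. i \<in> {1..p} \<Longrightarrow> A i \<in> carrier_mat d (n i)"
    and proper: "\<And>i y. i \<in> {1..p} \<Longrightarrow> y \<in> carrier_vec (n i) \<Longrightarrow> f i y \<noteq> -\<infinity>"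
    and x0: "\<forall>i\<in>{1..p}. x 0 i \<in> edom (n i) (f i)" and lam0: "lam 0 \<in> carrier_vec d"
    and w_dgf: "\<forall>j\<ge>1. \<forall>i\<in>{1..p}. dgf (n i) (edom (n i) (f i)) (m i) (M i) (w j i) (gw j i)"
    and x_opt: "\<forall>j\<ge>1. \<forall>i\<in>{1..p}. x j i \<in> carrier_vec (n i) \<and>
          (\<forall>y\<in>carrier_vec (n i).
             augL d p f A b \<beta> ((x (j - 1))(i := x j i)) (lam (j - 1)) + ereal (breg (w j i) (gw j i) (x (j - 1) i) (x j i))
             \<le> augL d p f A b \<beta> ((x (j - 1))(i := y)) (lam (j - 1)) + ereal (breg (w j i) (gw j i) (x (j - 1) i) y))"
    and lam_upd: "\<forall>j\<ge>1. lam j = lam (j - 1) - (\<theta> * \<beta>) \<cdot>\<^sub>v resid d p A b (x j)"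
  shows "augL d p f A b \<beta> (x (Suc K)) (lam (Suc K)) + ereal (\<Sum>i=1..p. m i / 4 * (vnorm (x (Suc K) i - x K i))\<^sup>2)
    \<le> augL d p f A b \<beta> (x K) (lam K)
      + ereal ((\<Sum>i=1..<p. ((real p - 2 + \<alpha>) * \<beta> * (opnorm (A i))\<^sup>2 / 2 - m i / 4) * (vnorm (x (Suc K) i - x K i))\<^sup>2)
        + ((real p - 1) * \<beta> * (opnorm (A p))\<^sup>2 / (2 * \<alpha>) - m p / 4) * (vnorm (x (Suc K) p - x K p))\<^sup>2
        + 1 / (\<beta> * \<theta>) * (vnorm (lam (Suc K) - lam K))\<^sup>2)"
proof -
  have lam: "lam j \<in> carrier_vec d" for j
  proof (induction j)
    case (Suc j)
    then show ?case
      using lam_upd[rule_format, of "Suc j"] resid_carrier[OF b] by simp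
  qed (rule lam0)
  have x: "\<And>i. i \<in> {1..p} \<Longrightarrow> x j i \<in> carrier_vec (n i)" for j
    using x0 x_opt by (cases j) (auto simp: edom_def)
  have opt: "augL d p f A b \<beta> ((x K)(i := x (Suc K) i)) (lam K)
      + ereal (breg (w (Suc K) i) (gw (Suc K) i) (x K i) (x (Suc K) i)) \<le> augL d p f A b \<beta> (x K) (lam K)"
    if "i \<in> {1..p}" for i
    using x_opt[rule_format, of "Suc K" i] x[OF that, of K] that by (force simp: breg_self)
  show ?thesis
    by (rule augL_nepj_step_le[where M = M, OF p2 alpha beta theta b A x x proper _ opt lam])
      (use w_dgf lam_upd in auto)
qed

lemma lyapunov_accounting_le:
  fixes a a' :: ereal
  assumes step: "a' + ereal s \<le> a + ereal (S + (C - \<mu>) * D + q)"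
    and new: "e' = s + c * G" and old: "\<mu> * D0 + c * G0 \<le> e" and "C * D0 \<ge> 0"
  shows "a' + ereal e' \<le> a + ereal e + ereal (S + (q + c * (G - G0)) + (C - \<mu>) * (D + D0))"
proof -
  have "a' + ereal e' = (a' + ereal s) + ereal (c * G)"
    unfolding new by (cases a') simp_all
  also have "\<dots> \<le> (a + ereal (S + (C - \<mu>) * D + q)) + ereal (c * G)"
    using step by (rule add_right_mono)
  also have "\<dots> \<le> a + ereal e + ereal (S + (q + c * (G - G0)) + (C - \<mu>) * (D + D0))"
    using assms(3,4) by (cases a) (simp_all add: algebra_simps)
  finally show ?thesis .
qed

theorem mainTheorem5:
  fixes p d :: nat and n :: "nat \<Rightarrow> nat"
    and f :: "nat \<Rightarrow> real vec \<Rightarrow> ereal" and gfp :: "real vec \<Rightarrow> real vec"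
    and A :: "nat \<Rightarrow> real mat" and b :: "real vec"
    and Lp \<alpha> \<beta> \<beta>bar \<theta> :: real and m M :: "nat \<Rightarrow> real"
    and w :: "nat \<Rightarrow> nat \<Rightarrow> real vec \<Rightarrow> real" and gw :: "nat \<Rightarrow> nat \<Rightarrow> real vec \<Rightarrow> real vec"
    and x :: "nat \<Rightarrow> nat \<Rightarrow> real vec" and lam :: "nat \<Rightarrow> real vec"
    and k :: nat
  assumes p2: "p \<ge> 2"
    and A_dim: "\<forall>i\<in>{1..p}. A i \<in> carrier_mat d (n i)"
    and b_dim: "b \<in> carrier_vec d"
    \<comment> \<open>(A0)\<close>
    and A0: "\<forall>i\<in>{1..<p}. proper_on (n i) (f i) \<and> lsc_on (n i) (f i)"
    \<comment> \<open>(A1)\<close>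
    and A1_nz: "A p \<noteq> 0\<^sub>m d (n p)"
    and A1_img: "b \<in> img (A p)" "\<forall>i\<in>{1..<p}. img (A i) \<subseteq> img (A p)"
    \<comment> \<open>(A2): f_p real-valued, differentiable, L_p-Lipschitz gradient gfp\<close>
    and A2_fin: "\<forall>y\<in>carrier_vec (n p). \<bar>f p y\<bar> \<noteq> \<infinity>"
    and A2_grad: "\<forall>y\<in>carrier_vec (n p). has_grad (n p) (\<lambda>z. real_of_ereal (f p z)) gfp y"
    and A2_lip: "\<forall>y\<in>carrier_vec (n p). \<forall>z\<in>carrier_vec (n p). vnorm (gfp y - gfp z) \<le> Lp * vnorm (y - z)"
    \<comment> \<open>(A3)\<close>
    and A3: "\<beta>bar \<ge> 0" "vval d p n f A b \<beta>bar > -\<infinity>"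
    \<comment> \<open>parameters of NEPJ-ADMM\<close>
    and alpha: "\<alpha> > 0" and beta: "\<beta> \<ge> \<beta>bar" "\<beta> > 0"
    and mM: "\<forall>i\<in>{1..p}. 0 < m i \<and> m i \<le> M i"
    and theta: "0 < \<theta>" "\<theta> < 2"
    and delta_i: "\<forall>i\<in>{1..<p}. m i / 4 - ((real p - 2 + \<alpha>) / 2
          + 2 * gamma_th \<theta> * (real p + 1) / sigma_pos (A p) * (opnorm (transpose_mat (A p)))\<^sup>2)
          * \<beta> * Max ((\<lambda>l. (opnorm (A l))\<^sup>2) ` {1..<p}) > 0"
    and delta_p: "m p / 4 - (\<beta> * (real p - 1) * (opnorm (A p))\<^sup>2 / (2 * \<alpha>)
          + gamma_th \<theta> * (real p + 1) * (Lp\<^sup>2 + 2 * (M p)\<^sup>2) / (\<beta> * sigma_pos (A p))) > 0"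
    \<comment> \<open>initial point\<close>
    and x0: "\<forall>i\<in>{1..p}. x 0 i \<in> edom (n i) (f i)"
    and lam0: "lam 0 \<in> carrier_vec d"
    \<comment> \<open>iteration k \<ge> 1: distance generating functions, block updates, multiplier update\<close>
    and w_dgf: "\<forall>j\<ge>1. \<forall>i\<in>{1..p}. dgf (n i) (edom (n i) (f i)) (m i) (M i) (w j i) (gw j i)"
    and x_opt: "\<forall>j\<ge>1. \<forall>i\<in>{1..p}. x j i \<in> carrier_vec (n i) \<and>
          (\<forall>y\<in>carrier_vec (n i).
             augL d p f A b \<beta> ((x (j - 1))(i := x j i)) (lam (j - 1)) + ereal (breg (w j i) (gw j i) (x (j - 1) i) (x j i))
             \<le> augL d p f A b \<beta> ((x (j - 1))(i := y)) (lam (j - 1)) + ereal (breg (w j i) (gw j i) (x (j - 1) i) y))"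
    and lam_upd: "\<forall>j\<ge>1. lam j = lam (j - 1) - (\<theta> * \<beta>) \<cdot>\<^sub>v resid d p A b (x j)"
    and k1: "k \<ge> 1"
  shows
    "let c1 = 2 * \<bar>\<theta> - 1\<bar> / (\<beta> * \<theta> * (1 - \<bar>\<theta> - 1\<bar>) * sigma_pos (A p));
         dx = (\<lambda>j i. if j = 0 then (if i = p then (1 / M p) \<cdot>\<^sub>v (transpose_mat (A p) *\<^sub>v lam 0 - gfp (x 0 p))
                                   else 0\<^sub>v (n i))
                     else x j i - x (j - 1) i);
         dl = (\<lambda>j. if j = 0 then 0\<^sub>v d else lam j - lam (j - 1));
         eta = (\<lambda>j. if j = 0 then m p / (4 * (M p)\<^sup>2) * (vnorm (transpose_mat (A p) *\<^sub>v lam 0 - gfp (x 0 p)))\<^sup>2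
                    else (\<Sum>i=1..p. m i / 4 * (vnorm (dx j i))\<^sup>2) + c1 / 2 * (vnorm (transpose_mat (A p) *\<^sub>v dl j))\<^sup>2);
         Lhat = (\<lambda>j. augL d p f A b \<beta> (x j) (lam j) + ereal (eta j));
         Theta_lam = 1 / (\<beta> * \<theta>) * (vnorm (dl k))\<^sup>2
            + c1 / 2 * ((vnorm (transpose_mat (A p) *\<^sub>v dl k))\<^sup>2 - (vnorm (transpose_mat (A p) *\<^sub>v dl (k - 1)))\<^sup>2);
         Theta_p = ((real p - 1) * \<beta> * (opnorm (A p))\<^sup>2 / (2 * \<alpha>) - m p / 4)
            * ((vnorm (dx k p))\<^sup>2 + (vnorm (dx (k - 1) p))\<^sup>2)
     in Lhat k \<le> Lhat (k - 1)
          + ereal ((\<Sum>i=1..<p. ((real p - 2 + \<alpha>) * \<beta> * (opnorm (A i))\<^sup>2 / 2 - m i / 4) * (vnorm (dx k i))\<^sup>2)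
                   + Theta_lam + Theta_p)"
proof -
  obtain K where k: "k = Suc K"
    using k1 by (cases k) auto
  then have km: "k - 1 = K"
    by simp
  have A: "\<And>i. i \<in> {1..p} \<Longrightarrow> A i \<in> carrier_mat d (n i)"
    using A_dim by blast
  have proper: "f i y \<noteq> -\<infinity>" if "i \<in> {1..p}" and "y \<in> carrier_vec (n i)" for i y
    using A0 A2_fin that by (cases "i = p") (auto simp: proper_on_def)
  define c1 where "c1 = 2 * \<bar>\<theta> - 1\<bar> / (\<beta> * \<theta> * (1 - \<bar>\<theta> - 1\<bar>) * sigma_pos (A p))"
  define dx where "dx = (\<lambda>j i. if j = 0 then (if i = p then (1 / M p) \<cdot>\<^sub>v (transpose_mat (A p) *\<^sub>v lam 0 - gfp (x 0 p))
      else 0\<^sub>v (n i)) else x j i - x (j - 1) i)"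
  define dl where "dl = (\<lambda>j. if j = 0 then 0\<^sub>v d else lam j - lam (j - 1))"
  define eta where "eta = (\<lambda>j. if j = 0 then m p / (4 * (M p)\<^sup>2) * (vnorm (transpose_mat (A p) *\<^sub>v lam 0 - gfp (x 0 p)))\<^sup>2
      else (\<Sum>i=1..p. m i / 4 * (vnorm (dx j i))\<^sup>2) + c1 / 2 * (vnorm (transpose_mat (A p) *\<^sub>v dl j))\<^sup>2)"
  define G where "G j = (vnorm (transpose_mat (A p) *\<^sub>v dl j))\<^sup>2" for j
  have eta_prev: "m p / 4 * (vnorm (dx K p))\<^sup>2 + c1 / 2 * G K \<le> eta K"
  proof (cases "K = 0")
    case True
    have "p \<in> {1..p}"
      using p2 by simp
    then have "M p > 0" and "transpose_mat (A p) *\<^sub>v 0\<^sub>v d = 0\<^sub>v (n p)"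
      using mM A by force+
    with True show ?thesis
      by (simp add: dx_def dl_def eta_def G_def vnorm_zero_vec vnorm_smult power_mult_distrib power_divide)
  next
    case False
    have "(\<Sum>i=1..<p. m i / 4 * (vnorm (dx K i))\<^sup>2) \<ge> 0"
      using mM by (intro sum_nonneg) (simp add: less_imp_le)
    moreover have "{1..p} = insert p {1..<p}"
      using p2 by auto
    ultimately show ?thesis
      using False by (simp add: eta_def G_def)
  qed
  have "augL d p f A b \<beta> (x k) (lam k) + ereal (eta k) \<le> augL d p f A b \<beta> (x K) (lam K) + ereal (eta K)
      + ereal ((\<Sum>i=1..<p. ((real p - 2 + \<alpha>) * \<beta> * (opnorm (A i))\<^sup>2 / 2 - m i / 4) * (vnorm (dx k i))\<^sup>2)
        + (1 / (\<beta> * \<theta>) * (vnorm (dl k))\<^sup>2 + c1 / 2 * (G k - G K))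
        + ((real p - 1) * \<beta> * (opnorm (A p))\<^sup>2 / (2 * \<alpha>) - m p / 4) * ((vnorm (dx k p))\<^sup>2 + (vnorm (dx K p))\<^sup>2))"
  proof (rule lyapunov_accounting_le[OF _ _ eta_prev])
    show "augL d p f A b \<beta> (x k) (lam k) + ereal (\<Sum>i=1..p. m i / 4 * (vnorm (dx k i))\<^sup>2) \<le> augL d p f A b \<beta> (x K) (lam K)
      + ereal ((\<Sum>i=1..<p. ((real p - 2 + \<alpha>) * \<beta> * (opnorm (A i))\<^sup>2 / 2 - m i / 4) * (vnorm (dx k i))\<^sup>2)
        + ((real p - 1) * \<beta> * (opnorm (A p))\<^sup>2 / (2 * \<alpha>) - m p / 4) * (vnorm (dx k p))\<^sup>2
        + 1 / (\<beta> * \<theta>) * (vnorm (dl k))\<^sup>2)"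
      using nepj_admm_iterate_le[OF p2 alpha beta(2) theta(1) b_dim A proper x0 lam0 w_dgf x_opt lam_upd, of K]
      by (simp add: k dx_def dl_def)
  qed (use p2 alpha beta in \<open>simp_all add: eta_def G_def k\<close>)
  then show ?thesis
    unfolding Let_def G_def c1_def dx_def dl_def eta_def km .
qed

end
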